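(* The $\lambda j$-calculus enjoys PSN: every $\lambda$-term that is $\beta$-strongly normalizing is $\lambda j$-strongly normalizing.
   Context: $\lambda j$-terms are generated by $t,u::= x\mid \lambda x.t\mid t\,u\mid t[x/u]$ ($x$ ranging over variables); $\lambda x.t$ and $t[x/u]$ bind $x$ in $t$ (not in $u$), and terms are considered modulo $\alpha$-conversion. $\lambda$-terms are $\lambda j$-terms without jumps $[x/u]$. $\mathrm{fv}(t)$ is the set of free variables, $t\{x/u\}$ is capture-avoiding meta-level substitution, and $|t|_x$ is the number of free occurrences of $x$ in $t$. If $|t|_x=n\ge2$, $t_{[y]_x}$ denotes any term obtained from $t$ by replacing $k$ of the free occurrences of $x$ by a fresh variable $y$, for some $1\le k\le n-1$. ${\tt L}$ denotes a (possibly empty) list of jumps $[x_1/u_1]\dots[x_k/u_k]$. The rewriting rules, closed under all contexts, are: $({\tt dB})$ $(\lambda x.t){\tt L}\,u\to t[x/u]{\tt L}$ where no $x_i$ of ${\tt L}$ is free in $u$; $({\tt w})$ $t[x/u]\to t$ if $|t|_x=0$; $({\tt d})$ $t[x/u]\to t\{x/u\}$ if $|t|_x=1$; $({\tt c})$ $t[x/u]\to t_{[y]_x}[x/u][y/u]$ if $|t|_x\ge2$, $y$ fresh. $\to_{\lambda j}$ is the union of all four. $\beta$-reduction on $\lambda$-terms is the contextual closure of $(\lambda x.t)u\to_\beta t\{x/u\}$. A term is strongly normalizing for a relation if it has no infinite reduction sequence. *)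

theory Defs
  imports Main
begin

text \<open>lambda-j terms modulo alpha-conversion, represented with de Bruijn indices.
  Lam t binds index 0 in t; Sub t u represents the jump t[x/u] and binds index 0 in t
  (but not in u).\<close>

datatype trm = Var nat | Lam trm | App trm trm | Sub trm trm

fun is_lam :: "trm \<Rightarrow> bool" where
  "is_lam (Var i) = True"
| "is_lam (Lam t) = is_lam t"
| "is_lam (App t u) = (is_lam t \<and> is_lam u)"
| "is_lam (Sub t u) = False"

fun lift :: "nat \<Rightarrow> trm \<Rightarrow> trm" where
  "lift k (Var i) = (if i < k then Var i else Var (Suc i))"
| "lift k (Lam t) = Lam (lift (Suc k) t)"
| "lift k (App t u) = App (lift k t) (lift k u)"
| "lift k (Sub t u) = Sub (lift (Suc k) t) (lift k u)"

fun subst :: "trm \<Rightarrow> nat \<Rightarrow> trm \<Rightarrow> trm" where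
  "subst (Var i) k u = (if i < k then Var i else if i = k then u else Var (i - 1))"
| "subst (Lam t) k u = Lam (subst t (Suc k) (lift 0 u))"
| "subst (App t1 t2) k u = App (subst t1 k u) (subst t2 k u)"
| "subst (Sub t1 t2) k u = Sub (subst t1 (Suc k) (lift 0 u)) (subst t2 k u)"

fun occ :: "nat \<Rightarrow> trm \<Rightarrow> nat" where
  "occ k (Var i) = (if i = k then 1 else 0)"
| "occ k (Lam t) = occ (Suc k) t"
| "occ k (App t u) = occ k t + occ k u"
| "occ k (Sub t u) = occ (Suc k) t + occ k u"

text \<open>repl x y t t': t' is obtained from t by replacing some (any subset of the)
  free occurrences of index x by index y\<close>
inductive repl :: "nat \<Rightarrow> nat \<Rightarrow> trm \<Rightarrow> trm \<Rightarrow> bool" where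
  repl_keep: "repl x y (Var i) (Var i)"
| repl_swap: "repl x y (Var x) (Var y)"
| repl_lam: "repl (Suc x) (Suc y) t t' \<Longrightarrow> repl x y (Lam t) (Lam t')"
| repl_app: "repl x y a a' \<Longrightarrow> repl x y b b' \<Longrightarrow> repl x y (App a b) (App a' b')"
| repl_sub: "repl (Suc x) (Suc y) a a' \<Longrightarrow> repl x y b b' \<Longrightarrow> repl x y (Sub a b) (Sub a' b')"

text \<open>t L for a list of jumps L = [x1/u1]...[xk/uk] (given as [u1,...,uk])\<close>
fun wrap :: "trm \<Rightarrow> trm list \<Rightarrow> trm" where
  "wrap t [] = t"
| "wrap t (u # us) = wrap (Sub t u) us"

inductive lj :: "trm \<Rightarrow> trm \<Rightarrow> bool" where
  dB: "lj (App (wrap (Lam t) L) u) (wrap (Sub t ((lift 0 ^^ length L) u)) L)"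
| w: "occ 0 t = 0 \<Longrightarrow> lj (Sub t u) (subst t 0 u)"
| d: "occ 0 t = 1 \<Longrightarrow> lj (Sub t u) (subst t 0 u)"
| c: "occ 0 t \<ge> 2 \<Longrightarrow> repl 0 1 (lift 1 t) t' \<Longrightarrow> occ 0 t' \<ge> 1 \<Longrightarrow> occ 1 t' \<ge> 1
      \<Longrightarrow> lj (Sub t u) (Sub (Sub t' (lift 0 u)) u)"
| lam: "lj t t' \<Longrightarrow> lj (Lam t) (Lam t')"
| appL: "lj t t' \<Longrightarrow> lj (App t u) (App t' u)"
| appR: "lj u u' \<Longrightarrow> lj (App t u) (App t u')"
| subL: "lj t t' \<Longrightarrow> lj (Sub t u) (Sub t' u)"
| subR: "lj u u' \<Longrightarrow> lj (Sub t u) (Sub t u')"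

inductive beta :: "trm \<Rightarrow> trm \<Rightarrow> bool" where
  root: "beta (App (Lam t) u) (subst t 0 u)"
| lam: "beta t t' \<Longrightarrow> beta (Lam t) (Lam t')"
| appL: "beta t t' \<Longrightarrow> beta (App t u) (App t' u)"
| appR: "beta u u' \<Longrightarrow> beta (App t u) (App t u')"

definition SN :: "('a \<Rightarrow> 'a \<Rightarrow> bool) \<Rightarrow> 'a \<Rightarrow> bool" where
  "SN r t \<longleftrightarrow> \<not> (\<exists>f. f 0 = t \<and> (\<forall>i. r (f i) (f (Suc i))))"

end

theory Submission
  imports Defs "HOL-Library.Multiset"
begin

(* The heart of the proof is the jump lemma sn_jumps: a term t[x1/w1]...[xn/wn] vs
   (jumps followed by arguments) is sn whenever every wi is sn and so is its expansion
   t{x1/w1}...{xn/wn} vs.  It is proved with the generic principle sn_by_decrease, by a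
   lexicographic measure: first the expansion under lj+, then the multiset of pairs
   (number of occurrences of xi in t, wi).  Rules w and d erase a pair, rule c splits a
   pair into two pairs with fewer occurrences, a step inside some wi decreases its pair,
   and every other step reduces the expansion.  From the jump lemma, sn_redex shows that
   (Lam b) u vs is sn when u and b{x/u} vs are; its dB step yields b[x/u] vs.
   Finally a beta-SN lambda-term is shown sn by induction on beta-reduction and subterms,
   distinguishing variable-headed, abstraction and redex-headed terms. *)

section \<open>Parallel substitution\<close>

definition up :: "(nat \<Rightarrow> trm) \<Rightarrow> nat \<Rightarrow> trm" where
  "up s = (\<lambda>i. case i of 0 \<Rightarrow> Var 0 | Suc j \<Rightarrow> lift 0 (s j))"

fun psubst :: "trm \<Rightarrow> (nat \<Rightarrow> trm) \<Rightarrow> trm" where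
  "psubst (Var i) s = s i"
| "psubst (Lam t) s = Lam (psubst t (up s))"
| "psubst (App t u) s = App (psubst t s) (psubst u s)"
| "psubst (Sub t u) s = Sub (psubst t (up s)) (psubst u s)"

lemma up_0 [simp]: "up s 0 = Var 0" and up_Suc [simp]: "up s (Suc j) = lift 0 (s j)"
  by (simp_all add: up_def)

lemma up_ren: "up (\<lambda>i. Var (f i)) = (\<lambda>i. Var (case i of 0 \<Rightarrow> 0 | Suc j \<Rightarrow> Suc (f j)))"
  by (auto simp: fun_eq_iff up_def split: nat.split)

(* Lifting and substitution are instances of parallel substitution; all index
   bookkeeping below is reduced to the composition laws of psubst. *)
lemma lift_psubst: "lift k t = psubst t (\<lambda>i. Var (if i < k then i else Suc i))"
proof (induction t arbitrary: k)
  case (Lam t) show ?case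
    by (simp add: Lam[of "Suc k"] up_ren) (rule arg_cong[where f="psubst t"], auto simp: fun_eq_iff split: nat.split)
next
  case (Sub t u) show ?case
    by (simp add: Sub(1)[of "Suc k"] Sub(2) up_ren) (rule arg_cong[where f="psubst t"], auto simp: fun_eq_iff split: nat.split)
qed auto

lemma lift0_psubst: "lift 0 t = psubst t (\<lambda>i. Var (Suc i))"
  by (simp add: lift_psubst)

lemma subst_psubst: "subst t k u = psubst t (\<lambda>i. if i < k then Var i else if i = k then u else Var (i - 1))"
proof (induction t arbitrary: k u)
  case (Lam t) show ?case
    by (simp add: Lam[of "Suc k"]) (rule arg_cong[where f="psubst t"], auto simp: fun_eq_iff up_def split: nat.split)
next
  case (Sub t u) show ?case
    by (simp add: Sub(1)[of "Suc k"] Sub(2)) (rule arg_cong[where f="psubst t"], auto simp: fun_eq_iff up_def split: nat.split)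
qed auto

lemma psubst_Var [simp]: "psubst t Var = t"
proof -
  have "up Var = Var" by (auto simp: fun_eq_iff up_def split: nat.split)
  then show ?thesis by (induction t) auto
qed

lemma psubst_ren_comp: "psubst (psubst t (\<lambda>i. Var (f i))) g = psubst t (\<lambda>i. g (f i))"
proof (induction t arbitrary: f g)
  case (Lam t) show ?case
    by (simp add: up_ren Lam) (rule arg_cong[where f="psubst t"], auto simp: fun_eq_iff up_def split: nat.split)
next
  case (Sub t u) show ?case
    by (simp add: up_ren Sub) (rule arg_cong[where f="psubst t"], auto simp: fun_eq_iff up_def split: nat.split)
qed auto

lemma psubst_comp_ren: "psubst (psubst t s) (\<lambda>i. Var (f i)) = psubst t (\<lambda>i. psubst (s i) (\<lambda>i. Var (f i)))"
proof (induction t arbitrary: s f)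
  case (Lam t) show ?case
    by (simp add: up_ren Lam) (rule arg_cong[where f="psubst t"], auto simp: fun_eq_iff up_def lift0_psubst psubst_ren_comp split: nat.split)
next
  case (Sub t u) show ?case
    by (simp add: up_ren Sub) (rule arg_cong[where f="psubst t"], auto simp: fun_eq_iff up_def lift0_psubst psubst_ren_comp split: nat.split)
qed auto

lemma psubst_comp: "psubst (psubst t s) g = psubst t (\<lambda>i. psubst (s i) g)"
proof (induction t arbitrary: s g)
  case (Lam t) show ?case
    by (simp add: Lam) (rule arg_cong[where f="psubst t"], auto simp: fun_eq_iff up_def lift0_psubst psubst_ren_comp psubst_comp_ren split: nat.split)
next
  case (Sub t u) show ?case
    by (simp add: Sub) (rule arg_cong[where f="psubst t"], auto simp: fun_eq_iff up_def lift0_psubst psubst_ren_comp psubst_comp_ren split: nat.split)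
qed auto

lemma psubst_lift0_up: "psubst (lift 0 x) (up s) = lift 0 (psubst x s)"
  by (simp add: lift0_psubst psubst_ren_comp psubst_comp_ren)

lemma lift1_psubst_up: "lift (Suc 0) (psubst t (up s)) = psubst (lift (Suc 0) t) (up (up s))"
  by (simp add: lift_psubst[of "Suc 0"] psubst_ren_comp psubst_comp_ren)
     (rule arg_cong[where f="psubst t"], auto simp: fun_eq_iff up_def lift0_psubst psubst_ren_comp split: nat.split)

lemma subst0_psubst_up: "subst (psubst t (up s)) 0 (psubst a s) = psubst (subst t 0 a) s"
  by (simp add: subst_psubst psubst_comp)
     (rule arg_cong[where f="psubst t"], auto simp: fun_eq_iff up_def lift0_psubst psubst_ren_comp split: nat.split)

lemma liftpow_psubst: "(lift 0 ^^ n) v = psubst v (\<lambda>i. Var (i + n))"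
  by (induction n) (simp_all add: lift0_psubst psubst_ren_comp)

lemma liftpow_add: "(lift 0 ^^ n) ((lift 0 ^^ k) w) = (lift 0 ^^ (n + k)) w"
  by (simp add: funpow_add)

lemma psubst_liftpow_gen: "psubst ((lift 0 ^^ n) w) s = psubst w (\<lambda>j. s (j + n))"
  by (simp add: liftpow_psubst psubst_ren_comp)

fun upn :: "nat \<Rightarrow> (nat \<Rightarrow> trm) \<Rightarrow> nat \<Rightarrow> trm" where
  "upn 0 s = s"
| "upn (Suc n) s = up (upn n s)"

lemma psubst_liftpow: "psubst ((lift 0 ^^ n) u) (upn n s) = (lift 0 ^^ n) (psubst u s)"
  by (induction n) (auto simp: psubst_lift0_up)

lemma upn_subst: "upn n (\<lambda>j. if j < k then Var j else if j = k then u else Var (j - 1))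
   = (\<lambda>j. if j < n + k then Var j else if j = n + k then (lift 0 ^^ n) u else Var (j - 1))"
  by (induction n) (auto simp: fun_eq_iff up_def split: nat.split)

lemma upn_lift1: "upn n (\<lambda>j. Var (if j < 1 then j else Suc j)) = (\<lambda>j. Var (if j < Suc n then j else Suc j))"
  by (induction n) (auto simp: fun_eq_iff up_def split: nat.split)

fun wsub :: "trm list \<Rightarrow> (nat \<Rightarrow> trm) \<Rightarrow> trm list" where
  "wsub [] s = []"
| "wsub (a # L) s = psubst a (upn (length L) s) # wsub L s"

lemma length_wsub [simp]: "length (wsub L s) = length L"
  by (induction L) auto

lemma psubst_wrap: "psubst (wrap t L) s = wrap (psubst t (upn (length L) s)) (wsub L s)"
  by (induction L arbitrary: t) auto

section \<open>Occurrences and partial renaming\<close>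

lemma occ_lift: "occ j (lift k t) = (if j < k then occ j t else if j = k then 0 else occ (j - 1) t)"
  by (induction t arbitrary: k j) auto

lemma occ_subst: "occ j (subst t k u) = (if j < k then occ j t else occ (Suc j) t) + occ k t * occ j u"
  by (induction t arbitrary: k u j) (auto simp: occ_lift algebra_simps)

lemma occ_liftpow: "occ j ((lift 0 ^^ n) u) = (if j < n then 0 else occ (j - n) u)"
  by (induction n arbitrary: j) (auto simp: occ_lift)

lemma occ_psubst_low:
  assumes "\<forall>i<m. s i = Var i" and "\<forall>i\<ge>m. \<forall>j<m. occ j (s i) = 0" and "j < m"
  shows "occ j (psubst t s) = occ j t"
  using assms
proof (induction t arbitrary: s m j)
  case (Var x) then show ?case by (cases "x < m") auto
next
  case (Lam t)
  have "occ (Suc j) (psubst t (up s)) = occ (Suc j) t"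
    by (rule Lam.IH[where m="Suc m"]) (use Lam.prems in \<open>auto simp: up_def occ_lift split: nat.split\<close>)
  then show ?case by simp
next
  case (Sub t u)
  have "occ (Suc j) (psubst t (up s)) = occ (Suc j) t"
    by (rule Sub.IH(1)[where m="Suc m"]) (use Sub.prems in \<open>auto simp: up_def occ_lift split: nat.split\<close>)
  then show ?case using Sub by simp
qed simp

lemma occ0_psubst_up: "occ 0 (psubst t (up s)) = occ 0 t"
  by (rule occ_psubst_low[where m=1]) (auto simp: up_def occ_lift split: nat.split)

lemma occ01_psubst_upup: "j < 2 \<Longrightarrow> occ j (psubst t (up (up s))) = occ j t"
  by (rule occ_psubst_low[where m=2]) (auto simp: up_def occ_lift split: nat.split)

fun occw :: "nat \<Rightarrow> trm list \<Rightarrow> nat" where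
  "occw j [] = 0"
| "occw j (a # L) = occ (j + length L) a + occw j L"

lemma occ_wrap: "occ j (wrap t L) = occ (j + length L) t + occw j L"
  by (induction L arbitrary: t j) auto

lemma repl_refl: "repl x y t t"
  by (induction t arbitrary: x y) (auto intro: repl.intros)

lemma repl_occ_other: "repl x y s s' \<Longrightarrow> j \<noteq> x \<Longrightarrow> j \<noteq> y \<Longrightarrow> occ j s' = occ j s"
  by (induction arbitrary: j rule: repl.induct) auto

lemma repl_occ_sum: "repl x y s s' \<Longrightarrow> x \<noteq> y \<Longrightarrow> occ x s' + occ y s' = occ x s + occ y s"
  by (induction rule: repl.induct) auto

lemma repl_noocc: "repl x y s s' \<Longrightarrow> occ x s = 0 \<Longrightarrow> s' = s"
  by (induction rule: repl.induct) auto

lemma repl_psubst: "repl x y s s' \<Longrightarrow> r x = Var x \<Longrightarrow> r y = Var y \<Longrightarrow> repl x y (psubst s r) (psubst s' r)"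
  by (induction arbitrary: r rule: repl.induct) (auto intro!: repl.intros simp: repl_refl)

lemma repl_psubst_eq: "repl x y s s' \<Longrightarrow> r x = r y \<Longrightarrow> psubst s' r = psubst s r"
  by (induction arbitrary: r rule: repl.induct) auto

section \<open>Stability of lj under substitution\<close>

lemma lj_psubst: "lj t t' \<Longrightarrow> lj (psubst t s) (psubst t' s)"
proof (induction arbitrary: s rule: lj.induct)
  case (dB t L u)
  show ?case
    using lj.dB[of "psubst t (up (upn (length L) s))" "wsub L s" "psubst u s"]
    by (simp add: psubst_wrap psubst_liftpow)
next
  case (w t u) then show ?case
    using lj.w[of "psubst t (up s)" "psubst u s"] by (simp add: occ0_psubst_up subst0_psubst_up)
next
  case (d t u) then show ?case
    using lj.d[of "psubst t (up s)" "psubst u s"] by (simp add: occ0_psubst_up subst0_psubst_up)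
next
  case (c t t' u)
  have r: "repl 0 1 (lift 1 (psubst t (up s))) (psubst t' (up (up s)))"
    using lift1_psubst_up[of t s] repl_psubst[OF c(2), of "up (up s)"] by (simp add: up_def)
  show ?case
    using lj.c[OF _ r, of "psubst u s"] c(1,3,4)
    by (simp add: occ0_psubst_up occ01_psubst_upup psubst_lift0_up)
qed (auto intro: lj.intros)

lemma lj_lift: "lj t t' \<Longrightarrow> lj (lift k t) (lift k t')"
  by (simp add: lift_psubst lj_psubst)

lemma lj_subst: "lj t t' \<Longrightarrow> lj (subst t k u) (subst t' k u)"
  by (simp add: subst_psubst lj_psubst)

lemma rtranclp_cong:
  assumes step: "\<And>x y. r x y \<Longrightarrow> r (f x) (f y)" and "r\<^sup>*\<^sup>* a b"
  shows "r\<^sup>*\<^sup>* (f a) (f b)"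
  using assms(2) by induction (auto intro: rtranclp.rtrancl_into_rtrancl step)

lemma tranclp_cong:
  assumes step: "\<And>x y. r x y \<Longrightarrow> r (f x) (f y)" and "r\<^sup>+\<^sup>+ a b"
  shows "r\<^sup>+\<^sup>+ (f a) (f b)"
  using assms(2) by induction (auto intro: tranclp.trancl_into_trancl step)

lemma ljs_psubst_arg: "(\<And>i. lj\<^sup>*\<^sup>* (s i) (s' i)) \<Longrightarrow> lj\<^sup>*\<^sup>* (psubst t s) (psubst t s')"
proof (induction t arbitrary: s s')
  case (Var x) then show ?case by simp
next
  case (Lam t)
  have "lj\<^sup>*\<^sup>* (up s i) (up s' i)" for i
    using Lam.prems by (cases i) (auto intro: rtranclp_cong[of lj "lift 0", OF lj_lift])
  then show ?case by (auto intro: rtranclp_cong[of lj Lam, OF lj.lam] Lam.IH)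
next
  case (App t u)
  have "lj\<^sup>*\<^sup>* (App (psubst t s) (psubst u s)) (App (psubst t s') (psubst u s))"
    using App by (auto intro: rtranclp_cong[of lj "\<lambda>x. App x _", OF lj.appL])
  also have "lj\<^sup>*\<^sup>* \<dots> (App (psubst t s') (psubst u s'))"
    using App by (auto intro: rtranclp_cong[of lj "App _", OF lj.appR])
  finally show ?case by simp
next
  case (Sub t u)
  have "lj\<^sup>*\<^sup>* (up s i) (up s' i)" for i
    using Sub.prems by (cases i) (auto intro: rtranclp_cong[of lj "lift 0", OF lj_lift])
  then have "lj\<^sup>*\<^sup>* (Sub (psubst t (up s)) (psubst u s)) (Sub (psubst t (up s')) (psubst u s))"
    using Sub by (auto intro: rtranclp_cong[of lj "\<lambda>x. Sub x _", OF lj.subL])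
  also have "lj\<^sup>*\<^sup>* \<dots> (Sub (psubst t (up s')) (psubst u s'))"
    using Sub by (auto intro: rtranclp_cong[of lj "Sub _", OF lj.subR])
  finally show ?case by simp
qed

lemma lj_occ0: "lj a b \<Longrightarrow> occ j a = 0 \<Longrightarrow> occ j b = 0"
proof (induction arbitrary: j rule: lj.induct)
  case (dB t L u) then show ?case by (simp add: occ_wrap occ_liftpow)
next
  case (c t t' u)
  have "occ (Suc (Suc j)) t' = occ (Suc (Suc j)) (lift 1 t)"
    by (rule repl_occ_other[OF c(2)]) auto
  then show ?case using c by (simp add: occ_lift)
qed (auto simp: occ_subst)

lemma lift_subst_noocc: "occ k b = 0 \<Longrightarrow> lift k (subst b k X) = b"
  by (induction b arbitrary: k X) auto

lemma subst_lift_same: "subst (lift k w) k X = w"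
  by (induction w arbitrary: k X) auto

lemma lj_lift_reflect:
  assumes h: "lj (lift k w) b"
  shows "\<exists>w'. b = lift k w' \<and> lj w w'"
proof -
  have "occ k b = 0" using lj_occ0[OF h] by (simp add: occ_lift)
  then have "b = lift k (subst b k (Var 0))" by (simp add: lift_subst_noocc)
  moreover have "lj w (subst b k (Var 0))"
    using lj_subst[OF h, of k "Var 0"] by (simp add: subst_lift_same)
  ultimately show ?thesis by blast
qed

lemma lj_liftpow_reflect: "lj ((lift 0 ^^ n) w) b \<Longrightarrow> \<exists>w'. b = (lift 0 ^^ n) w' \<and> lj w w'"
proof (induction n arbitrary: b)
  case (Suc n)
  then obtain b0 where "b = lift 0 b0" "lj ((lift 0 ^^ n) w) b0"
    using lj_lift_reflect[of 0 "(lift 0 ^^ n) w" b] by auto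
  with Suc.IH show ?case by fastforce
qed simp

section \<open>Application spines, jump lists and inversion of lj\<close>

fun apps :: "trm \<Rightarrow> trm list \<Rightarrow> trm" where
  "apps h [] = h"
| "apps h (v # vs) = apps (App h v) vs"

lemma apps_snoc: "apps h (vs @ [v]) = App (apps h vs) v"
  by (induction vs arbitrary: h) auto

lemma wrap_append: "wrap t (A @ B) = wrap (wrap t A) B"
  by (induction A arbitrary: t) auto

lemma wrap_snoc: "wrap t (A @ [a]) = Sub (wrap t A) a"
  by (simp add: wrap_append)

lemma wrap_Lam_cases: "wrap (Lam s) L = Lam s' \<Longrightarrow> L = [] \<and> s = s'"
  by (cases L rule: rev_exhaust) (auto simp: wrap_snoc)

lemma wrap_Lam_not_App: "wrap (Lam s) L \<noteq> App a b"
  by (cases L rule: rev_exhaust) (auto simp: wrap_snoc)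

lemma wrap_Lam_not_Var: "wrap (Lam s) L \<noteq> Var x"
  by (cases L rule: rev_exhaust) (auto simp: wrap_snoc)

lemma wrap_Lam_eq: "wrap (Lam s) L' = wrap t L \<Longrightarrow> \<exists>L0. L' = L0 @ L \<and> t = wrap (Lam s) L0"
proof (induction L arbitrary: L' rule: rev_induct)
  case (snoc a L)
  show ?case
  proof (cases L' rule: rev_exhaust)
    case Nil then show ?thesis using snoc.prems by (simp add: wrap_snoc)
  next
    case (snoc L0' a')
    with snoc.prems have "wrap (Lam s) L0' = wrap t L" "a' = a" by (auto simp: wrap_snoc)
    with snoc.IH snoc show ?thesis by fastforce
  qed
qed simp

inductive jump_root :: "trm \<Rightarrow> trm \<Rightarrow> trm \<Rightarrow> bool" where
  rw: "occ 0 t = 0 \<Longrightarrow> jump_root t u (subst t 0 u)"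
| rd: "occ 0 t = 1 \<Longrightarrow> jump_root t u (subst t 0 u)"
| rc: "occ 0 t \<ge> 2 \<Longrightarrow> repl 0 1 (lift 1 t) t' \<Longrightarrow> occ 0 t' \<ge> 1 \<Longrightarrow> occ 1 t' \<ge> 1
      \<Longrightarrow> jump_root t u (Sub (Sub t' (lift 0 u)) u)"

lemma lj_Var_inv: "\<not> lj (Var x) X"
  by (auto elim: lj.cases)

lemma lj_Lam_inv: "lj (Lam t) X \<Longrightarrow> \<exists>t'. lj t t' \<and> X = Lam t'"
  by (erule lj.cases) auto

lemma lj_App_inv: "lj (App t u) X \<Longrightarrow> (\<exists>t'. lj t t' \<and> X = App t' u) \<or> (\<exists>u'. lj u u' \<and> X = App t u')
   \<or> (\<exists>s L. t = wrap (Lam s) L \<and> X = wrap (Sub s ((lift 0 ^^ length L) u)) L)"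
  by (erule lj.cases) auto

lemma lj_Sub_inv: "lj (Sub t u) X \<Longrightarrow> (\<exists>t'. lj t t' \<and> X = Sub t' u) \<or> (\<exists>u'. lj u u' \<and> X = Sub t u') \<or> jump_root t u X"
  by (erule lj.cases) (auto intro: jump_root.intros)

lemma lj_wrap_inv: "lj (wrap t L) X \<Longrightarrow> (\<exists>t'. lj t t' \<and> X = wrap t' L)
  \<or> (\<exists>i a'. i < length L \<and> lj (L!i) a' \<and> X = wrap t (L[i:=a']))
  \<or> (\<exists>L1 a L2 R. L = L1 @ a # L2 \<and> jump_root (wrap t L1) a R \<and> X = wrap R L2)"
proof (induction L arbitrary: t X)
  case (Cons a L)
  from Cons.IH[of "Sub t a" X] Cons.prems
  consider (body) t'' where "lj (Sub t a) t''" "X = wrap t'' L"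
    | (arg) i a' where "i < length L" "lj (L!i) a'" "X = wrap (Sub t a) (L[i:=a'])"
    | (root) L1 b L2 R where "L = L1 @ b # L2" "jump_root (wrap (Sub t a) L1) b R" "X = wrap R L2"
    by auto
  then show ?case
  proof cases
    case body
    from lj_Sub_inv[OF body(1)] show ?thesis
    proof (elim disjE exE conjE)
      fix t' assume "lj t t'" "t'' = Sub t' a" then show ?thesis using body by auto
    next
      fix u' assume "lj a u'" "t'' = Sub t u'"
      then show ?thesis using body by (intro disjI2 disjI1 exI[of _ 0]) auto
    next
      assume "jump_root t a t''"
      then show ?thesis using body by (intro disjI2 disjI2 exI[of _ "[]"]) auto
    qed
  next
    case arg then show ?thesis by (intro disjI2 disjI1 exI[of _ "Suc i"]) auto
  next
    case root then show ?thesis by (intro disjI2 disjI2 exI[of _ "a # L1"]) auto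
  qed
qed simp

lemma lj_apps_inv: "lj (apps h vs) X \<Longrightarrow> (\<exists>h'. lj h h' \<and> X = apps h' vs)
  \<or> (\<exists>j v'. j < length vs \<and> lj (vs!j) v' \<and> X = apps h (vs[j:=v']))
  \<or> (\<exists>s L v vs0. vs = v # vs0 \<and> h = wrap (Lam s) L \<and> X = apps (wrap (Sub s ((lift 0 ^^ length L) v)) L) vs0)"
proof (induction vs arbitrary: h X)
  case (Cons v vs)
  from Cons.IH[of "App h v" X] Cons.prems
  consider (head) h'' where "lj (App h v) h''" "X = apps h'' vs"
    | (arg) j v' where "j < length vs" "lj (vs!j) v'" "X = apps (App h v) (vs[j:=v'])"
    | (redex) s L where "App h v = wrap (Lam s) L"
    by auto
  then show ?case
  proof cases
    case head
    from lj_App_inv[OF head(1)] show ?thesis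
    proof (elim disjE exE conjE)
      fix t' assume "lj h t'" "h'' = App t' v" then show ?thesis using head by auto
    next
      fix u' assume "lj v u'" "h'' = App h u'"
      then show ?thesis using head by (intro disjI2 disjI1 exI[of _ 0]) auto
    next
      fix s L assume "h = wrap (Lam s) L" "h'' = wrap (Sub s ((lift 0 ^^ length L) v)) L"
      then show ?thesis using head by auto
    qed
  next
    case arg then show ?thesis by (intro disjI2 disjI1 exI[of _ "Suc j"]) auto
  next
    case redex then show ?thesis using wrap_Lam_not_App by metis
  qed
qed simp

lemma lj_apps_head: "lj h h' \<Longrightarrow> lj (apps h vs) (apps h' vs)"
  by (induction vs arbitrary: h h') (auto intro: lj.appL)

lemma ljs_apps_head: "lj\<^sup>*\<^sup>* h h' \<Longrightarrow> lj\<^sup>*\<^sup>* (apps h vs) (apps h' vs)"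
  by (rule rtranclp_cong[of lj "\<lambda>h. apps h vs", OF lj_apps_head])

lemma lj_apps_arg: "j < length vs \<Longrightarrow> lj (vs!j) v' \<Longrightarrow> lj (apps h vs) (apps h (vs[j:=v']))"
proof (induction vs arbitrary: h j)
  case (Cons v vs) then show ?case
    by (cases j) (auto intro: lj_apps_head lj.appR)
qed simp

section \<open>Strong normalisation as an accessible part\<close>

definition sn :: "trm \<Rightarrow> bool" where
  "sn t = Wellfounded.accp (\<lambda>y x. lj x y) t"

lemma sn_intro: "(\<And>y. lj x y \<Longrightarrow> sn y) \<Longrightarrow> sn x"
  unfolding sn_def by (rule accp.intros) auto

lemma sn_step: "sn x \<Longrightarrow> lj x y \<Longrightarrow> sn y"
  unfolding sn_def by (rule accp_downward)

lemma sn_steps: "lj\<^sup>*\<^sup>* x y \<Longrightarrow> sn x \<Longrightarrow> sn y"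
  by (induction rule: rtranclp_induct) (auto intro: sn_step)

lemma SN_iff_accp: "SN r x \<longleftrightarrow> Wellfounded.accp (\<lambda>y x. r x y) x"
proof
  let ?A = "Wellfounded.accp (\<lambda>y x. r x y)"
  show "?A x" if sn: "SN r x"
  proof (rule ccontr)
    assume na: "\<not> ?A x"
    have step: "\<not> ?A z \<Longrightarrow> \<exists>y. r z y \<and> \<not> ?A y" for z
      by (meson accp.intros)
    define g where "g z = (SOME y. r z y \<and> \<not> ?A y)" for z
    have g: "\<not> ?A z \<Longrightarrow> r z (g z) \<and> \<not> ?A (g z)" for z
      unfolding g_def using step[of z] by (rule someI_ex)
    define f where "f i = (g ^^ i) x" for i
    have "\<not> ?A (f i)" for i by (induction i) (auto simp: f_def na g)
    then have "r (f i) (f (Suc i))" for i using g by (simp add: f_def)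
    moreover have "f 0 = x" by (simp add: f_def)
    ultimately show False using sn unfolding SN_def by blast
  qed
  show "SN r x" if "?A x"
  proof -
    from that have "\<forall>f. f 0 = x \<longrightarrow> \<not> (\<forall>i. r (f i) (f (Suc i)))"
    proof (induction rule: accp.induct)
      case (accI x)
      show ?case
      proof (intro allI impI notI)
        fix f assume f0: "f 0 = x" and chain: "\<forall>i. r (f i) (f (Suc i))"
        then have "r x (f (Suc 0))" by metis
        then have "\<not> (\<forall>i. r (f (Suc i)) (f (Suc (Suc i))))"
          using accI.IH[rule_format, of _ "\<lambda>i. f (Suc i)"] by simp
        then show False using chain by blast
      qed
    qed
    then show ?thesis unfolding SN_def by blast
  qed
qed

(* sn terms are also accessible for lj+, which lets measures compare terms several steps apart. *)
lemma sn_trancl: "sn x \<Longrightarrow> Wellfounded.accp (\<lambda>y x. lj\<^sup>+\<^sup>+ x y) x"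
  unfolding sn_def
proof (induction rule: accp.induct)
  case (accI x)
  show ?case
  proof (rule accp.intros)
    fix y assume "lj\<^sup>+\<^sup>+ x y"
    then obtain z where z: "lj x z" "lj\<^sup>*\<^sup>* z y" by (auto dest: tranclpD)
    have "Wellfounded.accp (\<lambda>y x. lj\<^sup>+\<^sup>+ x y) z" using accI.IH z(1) by blast
    with z(2) show "Wellfounded.accp (\<lambda>y x. lj\<^sup>+\<^sup>+ x y) y"
      by (auto dest: rtranclpD intro: accp_downward)
  qed
qed

definition sn_step_rel :: "(trm \<times> trm) set" where
  "sn_step_rel = {(a', a). lj a a' \<and> sn a}"

lemma wf_sn_step_rel: "wf sn_step_rel"
proof -
  let ?R = "\<lambda>a' a. lj a a' \<and> sn a"
  have "Wellfounded.accp ?R x" for x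
  proof (cases "sn x")
    case True
    have "Wellfounded.accp (\<lambda>y x. lj x y) \<le> Wellfounded.accp ?R"
      by (rule accp_subset) auto
    then show ?thesis using True unfolding sn_def by auto
  next
    case False then show ?thesis by (auto intro: accp.intros)
  qed
  then have "wfp ?R" by (simp add: wfp_iff_accp)
  then show ?thesis by (simp add: sn_step_rel_def wfp_def)
qed

lemma sn_by_decrease:
  fixes F K :: "'a \<Rightarrow> trm" and W :: "'a \<Rightarrow> 'b"
  assumes wf: "wf R"
    and step: "\<And>x Y. P x \<Longrightarrow> sn (K x) \<Longrightarrow> lj (F x) Y \<Longrightarrow> sn Y \<or> (\<exists>y. Y = F y \<and> P y \<and>
                 (lj\<^sup>+\<^sup>+ (K x) (K y) \<or> K y = K x \<and> (W y, W x) \<in> R))"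
    and "P x" and "sn (K x)"
  shows "sn (F x)"
proof -
  have "\<forall>x. K x = S \<longrightarrow> P x \<longrightarrow> sn (F x)" if "Wellfounded.accp (\<lambda>y x. lj\<^sup>+\<^sup>+ x y) S" and "sn S" for S
    using that
  proof (induction S rule: accp.induct)
    case (accI S)
    have "\<forall>x. W x = V \<longrightarrow> K x = S \<longrightarrow> P x \<longrightarrow> sn (F x)" for V
    proof (induction V rule: wf_induct[OF wf])
      case (1 V)
      show ?case
      proof (intro allI impI)
        fix x assume x: "W x = V" "K x = S" "P x"
        show "sn (F x)"
        proof (rule sn_intro)
          fix Y assume "lj (F x) Y"
          with step[OF x(3)] accI.prems x(2)
          consider "sn Y" | (strict) y where "Y = F y" "P y" "lj\<^sup>+\<^sup>+ S (K y)"
            | (equal) y where "Y = F y" "P y" "K y = S" "(W y, V) \<in> R"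
            using x(1) by blast
          then show "sn Y"
          proof cases
            case strict
            then have "sn (K y)" using accI.prems by (blast intro: sn_steps tranclp_into_rtranclp)
            with strict accI.IH show ?thesis by blast
          next
            case equal with 1 show ?thesis by blast
          qed
        qed
      qed
    qed
    then show ?case by blast
  qed
  then show ?thesis using assms(3,4) sn_trancl by blast
qed

section \<open>Jump lists and their expansion\<close>

(* The jump list [x1/w1]...[xn/wn] in de Bruijn form: the argument wi lies below the
   binders of the later jumps, hence is lifted by their number. *)
fun lifts :: "trm list \<Rightarrow> trm list" where
  "lifts [] = []"
| "lifts (w # ws) = (lift 0 ^^ length ws) w # lifts ws"

lemma length_lifts[simp]: "length (lifts ws) = length ws"
  by (induction ws) auto

lemma lifts_append: "lifts (xs @ ys) = map (lift 0 ^^ length ys) (lifts xs) @ lifts ys"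
  by (induction xs) (auto simp: liftpow_add add.commute)

lemma lifts_nth: "j < length ws \<Longrightarrow> lifts ws ! j = (lift 0 ^^ (length ws - Suc j)) (ws ! j)"
  by (induction ws arbitrary: j) (auto simp: nth_Cons split: nat.split)

lemma lifts_update: "j < length ws \<Longrightarrow> (lifts ws)[j := (lift 0 ^^ (length ws - Suc j)) w'] = lifts (ws[j := w'])"
  by (induction ws arbitrary: j) (auto split: nat.split)

definition jenv :: "trm list \<Rightarrow> nat \<Rightarrow> trm" where
  "jenv ws i = (if i < length ws then ws ! i else Var (i - length ws))"

definition expand :: "trm \<Rightarrow> trm list \<Rightarrow> trm" where
  "expand t ws = psubst t (jenv ws)"

definition occs :: "trm \<Rightarrow> nat \<Rightarrow> nat list" where
  "occs t k = map (\<lambda>i. occ i t) [0..<k]"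

definition occ_mset :: "trm \<Rightarrow> trm list \<Rightarrow> (nat \<times> trm) multiset" where
  "occ_mset t ws = mset (zip (occs t (length ws)) ws)"

lemma psubst_liftpow_jenv: "psubst ((lift 0 ^^ length ws) v) (jenv ws) = v"
  by (simp add: psubst_liftpow_gen jenv_def)

lemma jenv_Nil[simp]: "jenv [] = Var" by (simp add: jenv_def fun_eq_iff)

lemma wsub_subst0: "wsub (map (lift 0 ^^ Suc m) (lifts ws1))
      (\<lambda>j. if j < 0 then Var j else if j = 0 then u else Var (j - 1)) = map (lift 0 ^^ m) (lifts ws1)"
proof (induction ws1)
  case Nil then show ?case by simp
next
  case (Cons w ws1)
  have "psubst ((lift 0 ^^ Suc m) ((lift 0 ^^ length ws1) w)) (upn (length ws1) (\<lambda>j. if j < 0 then Var j else if j = 0 then u else Var (j - 1)))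
        = (lift 0 ^^ m) ((lift 0 ^^ length ws1) w)"
    by (simp only: upn_subst liftpow_add psubst_liftpow_gen) (simp add: liftpow_psubst)
  then show ?case using Cons by simp
qed

lemma wrap_subst0: "subst (wrap t (map (lift 0 ^^ Suc m) (lifts ws1))) 0 ((lift 0 ^^ m) w)
  = wrap (subst t (length ws1) ((lift 0 ^^ (length ws1 + m)) w)) (map (lift 0 ^^ m) (lifts ws1))"
proof -
  have "subst t (length ws1) ((lift 0 ^^ (length ws1 + m)) w) =
        psubst t (upn (length ws1) (\<lambda>j. if j < 0 then Var j else if j = 0 then (lift 0 ^^ m) w else Var (j - 1)))"
    unfolding upn_subst subst_psubst liftpow_add by (rule arg_cong[where f="psubst t"]) (auto simp: fun_eq_iff)
  then show ?thesis
    by (simp only: subst_psubst[of "wrap _ _"] psubst_wrap length_map length_lifts wsub_subst0)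
qed

lemma wsub_lift1: "wsub (map (lift 0 ^^ Suc m) (lifts ws1)) (\<lambda>j. Var (if j < 1 then j else Suc j))
    = map (lift 0 ^^ Suc (Suc m)) (lifts ws1)"
proof (induction ws1)
  case Nil then show ?case by simp
next
  case (Cons w ws1)
  have "psubst ((lift 0 ^^ Suc m) ((lift 0 ^^ length ws1) w)) (upn (length ws1) (\<lambda>j. Var (if j < 1 then j else Suc j)))
        = (lift 0 ^^ Suc (Suc m)) ((lift 0 ^^ length ws1) w)"
    by (simp only: upn_lift1 liftpow_add psubst_liftpow_gen) (simp del: funpow.simps(2) add: liftpow_psubst)
  then show ?case using Cons by simp
qed

lemma wrap_lift1: "lift 1 (wrap t (map (lift 0 ^^ Suc m) (lifts ws1)))
  = wrap (lift (Suc (length ws1)) t) (map (lift 0 ^^ Suc (Suc m)) (lifts ws1))"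
proof -
  have "lift (Suc (length ws1)) t = psubst t (upn (length ws1) (\<lambda>j. Var (if j < 1 then j else Suc j)))"
    by (simp only: upn_lift1 lift_psubst)
  then show ?thesis
    by (simp only: lift_psubst[of 1 "wrap _ _"] psubst_wrap length_map length_lifts wsub_lift1)
qed

lemma occw_lifts: "j \<le> m \<Longrightarrow> occw j (map (lift 0 ^^ Suc m) (lifts ws)) = 0"
  by (induction ws) (auto simp del: funpow.simps(2) simp add: liftpow_add occ_liftpow)

lemma repl_wrap_inv: "repl x y (wrap s L) r \<Longrightarrow> (\<forall>j<length L. occ (x + (length L - Suc j)) (L!j) = 0)
   \<Longrightarrow> \<exists>s'. r = wrap s' L \<and> repl (x + length L) (y + length L) s s'"
proof (induction L arbitrary: s r)
  case Nil then show ?case by simp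
next
  case (Cons a L)
  have "\<forall>j<length L. occ (x + (length L - Suc j)) (L!j) = 0"
  proof (intro allI impI)
    fix j assume "j < length L"
    then show "occ (x + (length L - Suc j)) (L!j) = 0" using Cons.prems(2)[rule_format, of "Suc j"] by simp
  qed
  with Cons.IH[of "Sub s a" r] Cons.prems(1) obtain s'' where
    s'': "r = wrap s'' L" "repl (x + length L) (y + length L) (Sub s a) s''" by auto
  from s''(2) obtain s' a' where "s'' = Sub s' a'" "repl (Suc (x + length L)) (Suc (y + length L)) s s'"
     "repl (x + length L) (y + length L) a a'"
    by (auto elim: repl.cases)
  moreover have "occ (x + length L) a = 0" using Cons.prems(2)[rule_format, of 0] by simp
  ultimately show ?case using s''(1) repl_noocc by fastforce
qed

lemma length_occs[simp]: "length (occs t k) = k" by (simp add: occs_def)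

lemma nth_occs[simp]: "j < k \<Longrightarrow> occs t k ! j = occ j t" by (simp add: occs_def)

lemma occ_mset_split: "occ_mset t (ws1 @ w # ws2) = mset (zip (take (length ws1) (occs t (length ws1 + Suc (length ws2)))) ws1)
   + {#(occ (length ws1) t, w)#} + mset (zip (drop (Suc (length ws1)) (occs t (length ws1 + Suc (length ws2)))) ws2)"
proof -
  let ?os = "occs t (length ws1 + Suc (length ws2))"
  have "?os = take (length ws1) ?os @ ?os ! length ws1 # drop (Suc (length ws1)) ?os"
    by (rule id_take_nth_drop) simp
  then have "zip ?os (ws1 @ w # ws2) = zip (take (length ws1) ?os @ ?os ! length ws1 # drop (Suc (length ws1)) ?os) (ws1 @ w # ws2)"
    by (rule arg_cong[where f="\<lambda>x. zip x _"])
  also have "\<dots> = zip (take (length ws1) ?os) ws1 @ (occ (length ws1) t, w) # zip (drop (Suc (length ws1)) ?os) ws2"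
    by (subst zip_append) simp_all
  finally have "zip ?os (ws1 @ w # ws2) = zip (take (length ws1) ?os) ws1 @ (occ (length ws1) t, w) # zip (drop (Suc (length ws1)) ?os) ws2" .
  then show ?thesis by (simp add: occ_mset_def)
qed

lemma expand_erase: "expand (subst t (length ws1) ((lift 0 ^^ (length ws1 + length ws2)) w)) (ws1 @ ws2) = expand t (ws1 @ w # ws2)"
  unfolding expand_def subst_psubst psubst_comp
  by (rule arg_cong[where f="psubst t"])
     (auto simp: fun_eq_iff psubst_liftpow_gen jenv_def nth_append nth_Cons')

lemma occ_mset_erase: "occ_mset (subst t (length ws1) ((lift 0 ^^ (length ws1 + length ws2)) w)) (ws1 @ ws2) + {#(occ (length ws1) t, w)#}
   = occ_mset t (ws1 @ w # ws2)"
proof -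
  let ?t = "subst t (length ws1) ((lift 0 ^^ (length ws1 + length ws2)) w)"
  let ?os = "occs t (length ws1 + Suc (length ws2))"
  have "occs ?t (length ws1 + length ws2) = take (length ws1) ?os @ drop (Suc (length ws1)) ?os"
    by (rule nth_equalityI) (auto simp: nth_append occ_subst occ_liftpow)
  then have "occ_mset ?t (ws1 @ ws2) = mset (zip (take (length ws1) ?os) ws1) + mset (zip (drop (Suc (length ws1)) ?os) ws2)"
    by (simp add: occ_mset_def)
  then show ?thesis by (simp add: occ_mset_split)
qed

lemma expand_dup:
  assumes r: "repl i (Suc i) (lift (Suc i) t) t'" and i: "i = length ws1"
  shows "expand t' (ws1 @ w # w # ws2) = expand t (ws1 @ w # ws2)"
proof -
  let ?r = "jenv (ws1 @ w # w # ws2)"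
  have "psubst t' ?r = psubst (lift (Suc i) t) ?r"
    by (rule repl_psubst_eq[OF r]) (simp add: jenv_def nth_append i)
  also have "\<dots> = psubst t (\<lambda>j. ?r (if j < Suc i then j else Suc j))"
    by (simp add: lift_psubst psubst_ren_comp)
  also have "(\<lambda>j. ?r (if j < Suc i then j else Suc j)) = jenv (ws1 @ w # ws2)"
    by (auto simp: fun_eq_iff jenv_def nth_append nth_Cons' i)
  finally show ?thesis by (simp add: expand_def)
qed

lemma occ_mset_dup:
  assumes r: "repl i (Suc i) (lift (Suc i) t) t'" and i: "i = length ws1"
  shows "\<exists>I. occ_mset t (ws1 @ w # ws2) = I + {#(occ i t, w)#} \<and>
           occ_mset t' (ws1 @ w # w # ws2) = I + {#(occ i t', w), (occ (Suc i) t', w)#}"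
proof -
  let ?os = "occs t (length ws1 + Suc (length ws2))"
  let ?os' = "occs t' (length ws1 + Suc (Suc (length ws2)))"
  have o1: "occ j t' = occ j t" if "j < i" for j
    using repl_occ_other[OF r, of j] that by (simp add: occ_lift)
  have o2: "occ j t' = occ (j - 1) t" if "j > Suc i" for j
    using repl_occ_other[OF r, of j] that by (simp add: occ_lift)
  have "take (length ws1) ?os' = take (length ws1) ?os"
    by (rule nth_equalityI) (auto simp: o1 i)
  moreover have "drop (Suc (Suc (length ws1))) ?os' = drop (Suc (length ws1)) ?os"
    by (rule nth_equalityI) (auto simp: o2 i)
  moreover have "occ_mset t' (ws1 @ w # w # ws2) = mset (zip (take (length ws1) ?os') ws1)
      + {#(occ i t', w)#} + {#(occ (Suc i) t', w)#} + mset (zip (drop (Suc (Suc (length ws1))) ?os') ws2)"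
  proof -
    have d1: "?os' ! length ws1 # drop (Suc (length ws1)) ?os' = drop (length ws1) ?os'"
      by (rule Cons_nth_drop_Suc) simp
    have d2: "?os' ! Suc (length ws1) # drop (Suc (Suc (length ws1))) ?os' = drop (Suc (length ws1)) ?os'"
      by (rule Cons_nth_drop_Suc) simp
    have e: "?os' = take (length ws1) ?os' @ ?os' ! length ws1 # ?os' ! Suc (length ws1) # drop (Suc (Suc (length ws1))) ?os'"
      unfolding d2 d1 append_take_drop_id ..
    have "zip ?os' (ws1 @ w # w # ws2) = zip (take (length ws1) ?os') ws1 @ (occ i t', w) # (occ (Suc i) t', w) # zip (drop (Suc (Suc (length ws1))) ?os') ws2"
      by (subst e) (simp add: i)
    then show ?thesis by (simp add: occ_mset_def)
  qed
  ultimately show ?thesis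
    by (intro exI[of _ "mset (zip (take (length ws1) ?os) ws1) + mset (zip (drop (Suc (length ws1)) ?os) ws2)"])
       (simp add: occ_mset_split i)
qed

lemma occ_mset_update:
  assumes i: "i < length ws"
  shows "\<exists>I. occ_mset t ws = I + {#(occ i t, ws!i)#} \<and> occ_mset t (ws[i:=w']) = I + {#(occ i t, w')#}"
proof -
  let ?os = "occs t (length ws)"
  have "zip ?os (ws[i:=w']) = (zip ?os ws)[i := (occ i t, w')]"
    using zip_update[of ?os i "occ i t" ws w'] i list_update_id[of ?os i] by simp
  then show ?thesis using i
  proof (intro exI[of _ "mset (zip ?os ws) - {#(occ i t, ws!i)#}"] conjI)
    have "(occ i t, ws!i) \<in> set (zip ?os ws)" using i by (auto simp: set_zip intro!: exI[of _ i])
    then show "occ_mset t ws = mset (zip ?os ws) - {#(occ i t, ws!i)#} + {#(occ i t, ws!i)#}" by (simp add: occ_mset_def)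
  qed (use i in \<open>auto simp: occ_mset_def mset_update\<close>)
qed

definition pair_ord :: "((nat \<times> trm) \<times> (nat \<times> trm)) set" where
  "pair_ord = less_than <*lex*> sn_step_rel"

lemma wf_mult_pair_ord: "wf (mult pair_ord)"
  unfolding pair_ord_def by (intro wf_mult wf_lex_prod wf_less_than wf_sn_step_rel)

lemma lifts_eq_split:
  assumes "lifts ws = L1 @ a # L2"
  obtains ws1 w ws2 where "ws = ws1 @ w # ws2" and "L1 = map (lift 0 ^^ Suc (length ws2)) (lifts ws1)"
    and "a = (lift 0 ^^ length ws2) w" and "L2 = lifts ws2"
proof -
  define i where "i = length L1"
  have i: "i < length ws" using arg_cong[OF assms, of length] by (simp add: i_def)
  define ws1 where "ws1 = take i ws"
  define ws2 where "ws2 = drop (Suc i) ws"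
  have ws: "ws = ws1 @ ws ! i # ws2" using i by (simp add: ws1_def ws2_def id_take_nth_drop)
  have "length ws1 = i" using i by (simp add: ws1_def)
  have "L1 @ a # L2 = map (lift 0 ^^ Suc (length ws2)) (lifts ws1) @ (lift 0 ^^ length ws2) (ws ! i) # lifts ws2"
    unfolding assms[symmetric] by (subst ws) (simp add: lifts_append)
  moreover have "length (map (lift 0 ^^ Suc (length ws2)) (lifts ws1)) = length L1"
    using \<open>length ws1 = i\<close> by (simp add: i_def)
  ultimately have "L1 = map (lift 0 ^^ Suc (length ws2)) (lifts ws1) \<and>
      a # L2 = (lift 0 ^^ length ws2) (ws ! i) # lifts ws2"
    using append_eq_append_conv by metis
  then show thesis using that[OF ws] by simp
qed

lemma jump_erase:
  fixes t w :: trm and xs ys :: "trm list"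
  defines "t' \<equiv> subst t (length xs) ((lift 0 ^^ (length xs + length ys)) w)"
  shows "wrap (subst (wrap t (map (lift 0 ^^ Suc (length ys)) (lifts xs))) 0 ((lift 0 ^^ length ys) w)) (lifts ys)
           = wrap t' (lifts (xs @ ys))"
    and "expand t' (xs @ ys) = expand t (xs @ w # ys)"
    and "(occ_mset t' (xs @ ys), occ_mset t (xs @ w # ys)) \<in> mult pair_ord"
proof -
  show "wrap (subst (wrap t (map (lift 0 ^^ Suc (length ys)) (lifts xs))) 0 ((lift 0 ^^ length ys) w)) (lifts ys)
           = wrap t' (lifts (xs @ ys))"
    by (simp del: funpow.simps(2) add: wrap_subst0 t'_def lifts_append wrap_append)
  show "expand t' (xs @ ys) = expand t (xs @ w # ys)"
    unfolding t'_def by (rule expand_erase)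
  have "(occ_mset t' (xs @ ys) + {#}, occ_mset t' (xs @ ys) + {#(occ (length xs) t, w)#}) \<in> mult pair_ord"
    by (rule one_step_implies_mult) auto
  then show "(occ_mset t' (xs @ ys), occ_mset t (xs @ w # ys)) \<in> mult pair_ord"
    unfolding t'_def occ_mset_erase by simp
qed

lemma jump_dup:
  assumes r: "repl 0 1 (lift 1 (wrap t (map (lift 0 ^^ Suc (length ys)) (lifts xs)))) B"
    and o0: "occ 0 B \<ge> 1" and o1: "occ 1 B \<ge> 1"
  obtains t' where "B = wrap t' (map (lift 0 ^^ Suc (Suc (length ys))) (lifts xs))"
    and "expand t' (xs @ w # w # ys) = expand t (xs @ w # ys)"
    and "(occ_mset t' (xs @ w # w # ys), occ_mset t (xs @ w # ys)) \<in> mult pair_ord"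
proof -
  let ?i = "length xs"
  let ?A = "map (lift 0 ^^ Suc (Suc (length ys))) (lifts xs)"
  have cond: "\<forall>j<length ?A. occ (0 + (length ?A - Suc j)) (?A ! j) = 0"
    by (auto simp: lifts_nth occ_liftpow liftpow_add simp del: funpow.simps(2))
  from repl_wrap_inv[OF r[unfolded wrap_lift1] cond]
  obtain t' where B: "B = wrap t' ?A" and t': "repl ?i (Suc ?i) (lift (Suc ?i) t) t'"
    by auto
  have "occ ?i t' + occ (Suc ?i) t' = occ ?i t"
    using repl_occ_sum[OF t'] by (simp add: occ_lift)
  moreover have "occ 0 B = occ ?i t'" "occ 1 B = occ (Suc ?i) t'"
    by (simp_all add: occ_wrap B occw_lifts del: funpow.simps(2))
  ultimately have less: "occ ?i t' < occ ?i t" "occ (Suc ?i) t' < occ ?i t"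
    using o0 o1 by auto
  from occ_mset_dup[OF t' refl, of w ys] obtain I where
    I: "occ_mset t (xs @ w # ys) = I + {#(occ ?i t, w)#}"
       "occ_mset t' (xs @ w # w # ys) = I + {#(occ ?i t', w), (occ (Suc ?i) t', w)#}"
    by blast
  have "(occ_mset t' (xs @ w # w # ys), occ_mset t (xs @ w # ys)) \<in> mult pair_ord"
    unfolding I by (rule one_step_implies_mult) (use less in \<open>auto simp: pair_ord_def\<close>)
  with B expand_dup[OF t' refl] show thesis by (rule that)
qed

lemma jump_root_step:
  assumes "lifts ws = L1 @ a # L2" and "jump_root (wrap t L1) a R"
  shows "\<exists>t' ws'. wrap R L2 = wrap t' (lifts ws') \<and> set ws' \<subseteq> set ws \<and>
           expand t' ws' = expand t ws \<and> (occ_mset t' ws', occ_mset t ws) \<in> mult pair_ord"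
proof -
  obtain xs w ys where ws: "ws = xs @ w # ys" and L1: "L1 = map (lift 0 ^^ Suc (length ys)) (lifts xs)"
    and a: "a = (lift 0 ^^ length ys) w" and L2: "L2 = lifts ys"
    using lifts_eq_split[OF assms(1)] .
  from assms(2) consider (erase) "R = subst (wrap t L1) 0 a"
    | (dup) B where "R = Sub (Sub B (lift 0 a)) a" "repl 0 1 (lift 1 (wrap t L1)) B" "occ 0 B \<ge> 1" "occ 1 B \<ge> 1"
    by cases auto
  then show ?thesis
  proof cases
    case erase
    let ?t' = "subst t (length xs) ((lift 0 ^^ (length xs + length ys)) w)"
    from jump_erase[where t=t and w=w and xs=xs and ys=ys] show ?thesis
      by (intro exI[of _ ?t'] exI[of _ "xs @ ys"]) (auto simp: erase ws L1 a L2 simp del: funpow.simps(2))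
  next
    case dup
    obtain t' where B: "B = wrap t' (map (lift 0 ^^ Suc (Suc (length ys))) (lifts xs))"
      and "expand t' (xs @ w # w # ys) = expand t (xs @ w # ys)"
      and "(occ_mset t' (xs @ w # w # ys), occ_mset t (xs @ w # ys)) \<in> mult pair_ord"
      using jump_dup[OF dup(2)[unfolded L1] dup(3,4), of w] by blast
    moreover have "wrap R L2 = wrap t' (lifts (xs @ w # w # ys))"
      by (simp add: dup(1) B a L2 lifts_append wrap_append)
    ultimately show ?thesis
      by (intro exI[of _ t'] exI[of _ "xs @ w # w # ys"]) (simp add: ws)
  qed
qed

lemma jump_arg_step:
  assumes i: "i < length ws" and step: "lj (ws ! i) w'" and sn: "sn (ws ! i)"
  shows "lj\<^sup>*\<^sup>* (expand t ws) (expand t (ws[i := w']))" and "(occ_mset t (ws[i := w']), occ_mset t ws) \<in> mult pair_ord"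
proof -
  have "lj\<^sup>*\<^sup>* (jenv ws j) (jenv (ws[i := w']) j)" for j
  proof (cases "j = i")
    case True then show ?thesis using step i by (simp add: jenv_def)
  qed (simp add: jenv_def)
  then show "lj\<^sup>*\<^sup>* (expand t ws) (expand t (ws[i := w']))"
    unfolding expand_def by (rule ljs_psubst_arg)
  from occ_mset_update[OF i, of t w'] obtain I
    where I: "occ_mset t ws = I + {#(occ i t, ws ! i)#}" "occ_mset t (ws[i := w']) = I + {#(occ i t, w')#}" by blast
  show "(occ_mset t (ws[i := w']), occ_mset t ws) \<in> mult pair_ord"
  proof -
    have "((occ i t, w'), (occ i t, ws ! i)) \<in> pair_ord"
      using step sn by (simp add: pair_ord_def sn_step_rel_def)
    then show ?thesis unfolding I by (intro one_step_implies_mult) auto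
  qed
qed

lemma expand_dB: "lj (App (expand (wrap (Lam s) L) ws) v) (expand (wrap (Sub s ((lift 0 ^^ (length L + length ws)) v)) L) ws)"
proof -
  have "psubst ((lift 0 ^^ (length L + length ws)) v) (upn (length L) (jenv ws)) = (lift 0 ^^ length L) v"
    by (simp only: liftpow_add[symmetric] psubst_liftpow psubst_liftpow_jenv)
  then show ?thesis
    unfolding expand_def psubst_wrap
    using lj.dB[of "psubst s (up (upn (length L) (jenv ws)))" "wsub L (jenv ws)" v] by simp
qed

lemma jump_head_step:
  assumes sn: "\<forall>w\<in>set ws. sn w" and step: "lj (wrap t (lifts ws)) h"
  shows "\<exists>t' ws'. h = wrap t' (lifts ws') \<and> (\<forall>w\<in>set ws'. sn w) \<and>
           (lj\<^sup>+\<^sup>+ (expand t ws) (expand t' ws') \<or> expand t' ws' = expand t ws \<and> (occ_mset t' ws', occ_mset t ws) \<in> mult pair_ord)"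
proof -
  from lj_wrap_inv[OF step] consider
      (body) t' where "lj t t'" "h = wrap t' (lifts ws)"
    | (arg) i a where "i < length ws" "lj (lifts ws ! i) a" "h = wrap t ((lifts ws)[i := a])"
    | (root) L1 a L2 R where "lifts ws = L1 @ a # L2" "jump_root (wrap t L1) a R" "h = wrap R L2"
    by auto
  then show ?thesis
  proof cases
    case body
    then have "lj (expand t ws) (expand t' ws)" unfolding expand_def by (simp add: lj_psubst)
    with body sn show ?thesis by blast
  next
    case arg
    obtain w' where a: "a = (lift 0 ^^ (length ws - Suc i)) w'" and w': "lj (ws ! i) w'"
      using lj_liftpow_reflect arg(1,2) lifts_nth by metis
    let ?ws = "ws[i := w']"
    have "h = wrap t (lifts ?ws)" using arg a lifts_update by simp
    moreover have "\<forall>w\<in>set ?ws. sn w"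
      using sn set_update_subset_insert[of ws i w'] sn_step[OF _ w'] arg(1) by auto
    moreover have "lj\<^sup>*\<^sup>* (expand t ws) (expand t ?ws)" and "(occ_mset t ?ws, occ_mset t ws) \<in> mult pair_ord"
      using jump_arg_step[OF arg(1) w'] sn arg(1) by auto
    then have "lj\<^sup>+\<^sup>+ (expand t ws) (expand t ?ws) \<or> expand t ?ws = expand t ws \<and> (occ_mset t ?ws, occ_mset t ws) \<in> mult pair_ord"
      by (metis rtranclpD)
    ultimately show ?thesis by blast
  next
    case root
    then show ?thesis using jump_root_step[OF root(1,2)] sn by blast
  qed
qed

lemma jump_step:
  assumes sn: "\<forall>w\<in>set ws. sn w" and step: "lj (apps (wrap t (lifts ws)) vs) Y"
  shows "\<exists>t' ws' vs'. Y = apps (wrap t' (lifts ws')) vs' \<and> (\<forall>w\<in>set ws'. sn w) \<and>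
           (lj\<^sup>+\<^sup>+ (apps (expand t ws) vs) (apps (expand t' ws') vs') \<or>
            apps (expand t' ws') vs' = apps (expand t ws) vs \<and> (occ_mset t' ws', occ_mset t ws) \<in> mult pair_ord)"
proof -
  from lj_apps_inv[OF step] consider
      (head) h where "lj (wrap t (lifts ws)) h" "Y = apps h vs"
    | (arg) j v' where "j < length vs" "lj (vs ! j) v'" "Y = apps (wrap t (lifts ws)) (vs[j := v'])"
    | (dB) s L v vs0 where "vs = v # vs0" "wrap t (lifts ws) = wrap (Lam s) L"
        "Y = apps (wrap (Sub s ((lift 0 ^^ length L) v)) L) vs0"
    by blast
  then show ?thesis
  proof cases
    case head
    from jump_head_step[OF sn head(1)] obtain t' ws' where h: "h = wrap t' (lifts ws')" "\<forall>w\<in>set ws'. sn w"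
      and decr: "lj\<^sup>+\<^sup>+ (expand t ws) (expand t' ws') \<or> expand t' ws' = expand t ws \<and> (occ_mset t' ws', occ_mset t ws) \<in> mult pair_ord"
      by blast
    have "lj\<^sup>+\<^sup>+ (apps (expand t ws) vs) (apps (expand t' ws') vs) \<or>
        apps (expand t' ws') vs = apps (expand t ws) vs \<and> (occ_mset t' ws', occ_mset t ws) \<in> mult pair_ord"
      using decr tranclp_cong[of lj "\<lambda>h. apps h vs", OF lj_apps_head] by auto
    with head h show ?thesis by blast
  next
    case arg
    then show ?thesis using sn lj_apps_arg by blast
  next
    case dB
    from wrap_Lam_eq[OF dB(2)[symmetric]] obtain L0 where L0: "L = L0 @ lifts ws" "t = wrap (Lam s) L0"
      by blast
    let ?t = "wrap (Sub s ((lift 0 ^^ (length L0 + length ws)) v)) L0"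
    have "Y = apps (wrap ?t (lifts ws)) vs0" by (simp add: dB(3) L0 wrap_append)
    moreover have "lj (apps (expand t ws) vs) (apps (expand ?t ws) vs0)"
      unfolding dB(1) L0(2) by (simp add: expand_dB lj_apps_head)
    ultimately show ?thesis using sn by blast
  qed
qed

lemma sn_jumps:
  assumes "\<forall>w\<in>set ws. sn w" and "sn (apps (expand t ws) vs)"
  shows "sn (apps (wrap t (lifts ws)) vs)"
proof -
  let ?F = "\<lambda>(t, ws, vs). apps (wrap t (lifts ws)) vs"
  let ?K = "\<lambda>(t, ws, vs). apps (expand t ws) vs"
  let ?W = "\<lambda>(t, ws, vs). occ_mset t ws"
  let ?P = "\<lambda>(t, ws, vs). \<forall>w\<in>set ws. sn w"
  have step: "sn Y \<or> (\<exists>y. Y = ?F y \<and> ?P y \<and> (lj\<^sup>+\<^sup>+ (?K x) (?K y) \<or> ?K y = ?K x \<and> (?W y, ?W x) \<in> mult pair_ord))"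
    if "?P x" and "lj (?F x) Y" for x Y
    using that jump_step by (cases x) fastforce
  from sn_by_decrease[OF wf_mult_pair_ord step, of "(t, ws, vs)"] assms show ?thesis by simp
qed

section \<open>Redexes, neutral terms and abstractions\<close>

lemma expand_single: "expand b [u] = subst b 0 u"
  unfolding expand_def subst_psubst by (rule arg_cong[where f="psubst b"]) (auto simp: fun_eq_iff jenv_def)

lemma redex_step:
  assumes "lj (apps (App (Lam b) u) vs) Y"
  shows "Y = apps (wrap b (lifts [u])) vs \<or>
    (\<exists>b' u' vs'. Y = apps (App (Lam b') u') vs' \<and> lj\<^sup>*\<^sup>* u u' \<and>
       (lj\<^sup>+\<^sup>+ (apps (subst b 0 u) vs) (apps (subst b' 0 u') vs') \<or>
        apps (subst b' 0 u') vs' = apps (subst b 0 u) vs \<and> lj u u'))"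
proof -
  from lj_apps_inv[OF assms] consider
      (head) h where "lj (App (Lam b) u) h" "Y = apps h vs"
    | (arg) j v' where "j < length vs" "lj (vs ! j) v'" "Y = apps (App (Lam b) u) (vs[j := v'])"
    by (auto dest: wrap_Lam_not_App[THEN notE, OF sym])
  then show ?thesis
  proof cases
    case head
    from lj_App_inv[OF head(1)] consider
        (body) b' where "lj b b'" "h = App (Lam b') u"
      | (argument) u' where "lj u u'" "h = App (Lam b) u'"
      | (root) "h = Sub b u"
      by (auto dest: lj_Lam_inv wrap_Lam_cases[OF sym])
    then show ?thesis
    proof cases
      case body
      then have "lj (apps (subst b 0 u) vs) (apps (subst b' 0 u) vs)"
        by (intro lj_apps_head lj_subst)
      with body head show ?thesis by blast
    next
      case argument
      have "lj\<^sup>*\<^sup>* (apps (subst b 0 u) vs) (apps (subst b 0 u') vs)"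
        unfolding subst_psubst using argument(1) by (intro ljs_apps_head ljs_psubst_arg) auto
      then have "lj\<^sup>+\<^sup>+ (apps (subst b 0 u) vs) (apps (subst b 0 u') vs) \<or>
          apps (subst b 0 u') vs = apps (subst b 0 u) vs \<and> lj u u'"
        using argument(1) by (metis rtranclpD)
      with argument head r_into_rtranclp[of lj, OF argument(1)] show ?thesis by blast
    next
      case root
      with head show ?thesis by simp
    qed
  next
    case arg
    have "lj (apps (subst b 0 u) vs) (apps (subst b 0 u) (vs[j := v']))"
      using arg(1,2) by (rule lj_apps_arg)
    with arg show ?thesis by blast
  qed
qed

lemma sn_redex:
  assumes "sn u" and "sn (apps (subst b 0 u) vs)"
  shows "sn (apps (App (Lam b) u) vs)"
proof -
  let ?F = "\<lambda>(b, u, vs). apps (App (Lam b) u) vs"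
  let ?K = "\<lambda>(b, u, vs). apps (subst b 0 u) vs"
  let ?W = "\<lambda>(b, u, vs). u"
  let ?P = "\<lambda>(b, u, vs). sn u"
  have step: "sn Y \<or> (\<exists>y. Y = ?F y \<and> ?P y \<and> (lj\<^sup>+\<^sup>+ (?K x) (?K y) \<or> ?K y = ?K x \<and> (?W y, ?W x) \<in> sn_step_rel))"
    if P: "?P x" and K: "sn (?K x)" and step: "lj (?F x) Y" for x Y
  proof -
    obtain b u vs where x: "x = (b, u, vs)" by (cases x)
    from redex_step[OF step[unfolded x, simplified]] consider
        (jump) "Y = apps (wrap b (lifts [u])) vs"
      | (redex) b' u' vs' where "Y = apps (App (Lam b') u') vs'" "lj\<^sup>*\<^sup>* u u'"
          "lj\<^sup>+\<^sup>+ (apps (subst b 0 u) vs) (apps (subst b' 0 u') vs') \<or>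
           apps (subst b' 0 u') vs' = apps (subst b 0 u) vs \<and> lj u u'"
      by blast
    then show ?thesis
    proof cases
      case jump
      then have "sn Y" using sn_jumps[of "[u]" b vs] P K by (simp add: x expand_single)
      then show ?thesis ..
    next
      case redex
      have "sn u'" using sn_steps[OF redex(2)] P by (simp add: x)
      with redex P show ?thesis
        by (intro disjI2 exI[of _ "(b', u', vs')"]) (auto simp: x sn_step_rel_def)
    qed
  qed
  from sn_by_decrease[OF wf_sn_step_rel step, of "(b, u, vs)"] assms show ?thesis by simp
qed

(* A variable applied to sn arguments is sn: every step reduces one argument, which
   decreases the multiset of arguments. *)
lemma sn_apps_Var: "\<forall>v\<in>set vs. sn v \<Longrightarrow> sn (apps (Var x) vs)"
proof (induction "mset vs" arbitrary: vs rule: wf_induct_rule[OF wf_mult[OF wf_sn_step_rel], case_names less])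
  case less
  show ?case
  proof (rule sn_intro)
    fix Y assume "lj (apps (Var x) vs) Y"
    then obtain j v' where j: "j < length vs" "lj (vs ! j) v'" and Y: "Y = apps (Var x) (vs[j := v'])"
      using lj_apps_inv lj_Var_inv wrap_Lam_not_Var by metis
    define I where "I = mset vs - {#vs ! j#}"
    have "(I + {#v'#}, I + {#vs ! j#}) \<in> mult sn_step_rel"
      using j less.prems by (intro one_step_implies_mult) (auto simp: sn_step_rel_def)
    moreover have "I + {#vs ! j#} = mset vs" and "I + {#v'#} = mset (vs[j := v'])"
      using j(1) by (simp_all add: I_def mset_update)
    ultimately have smaller: "(mset (vs[j := v']), mset vs) \<in> mult sn_step_rel" by simp
    have "sn v'" using less.prems j by (meson nth_mem sn_step)
    then have "\<forall>v\<in>set (vs[j := v']). sn v"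
      using less.prems set_update_subset_insert[of vs j v'] by blast
    with less.hyps smaller show "sn Y" unfolding Y by blast
  qed
qed

lemma sn_Lam: "sn b \<Longrightarrow> sn (Lam b)"
  unfolding sn_def
proof (induction rule: accp.induct)
  case (accI b)
  show ?case
  proof (rule accp.intros)
    fix y assume "lj (Lam b) y"
    then obtain b' where "lj b b'" "y = Lam b'" using lj_Lam_inv by blast
    then show "Wellfounded.accp (\<lambda>y x. lj x y) y" using accI.IH by blast
  qed
qed

section \<open>Beta-strongly normalising lambda-terms\<close>

lemma is_lam_lift: "is_lam t \<Longrightarrow> is_lam (lift k t)"
  by (induction t arbitrary: k) auto

lemma is_lam_subst: "is_lam t \<Longrightarrow> is_lam u \<Longrightarrow> is_lam (subst t k u)"
  by (induction t arbitrary: k u) (auto simp: is_lam_lift)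

lemma is_lam_beta: "beta t t' \<Longrightarrow> is_lam t \<Longrightarrow> is_lam t'"
  by (induction rule: beta.induct) (auto simp: is_lam_subst)

lemma is_lam_apps: "is_lam (apps h vs) \<Longrightarrow> is_lam h"
  by (induction vs rule: rev_induct) (auto simp: apps_snoc)

lemma beta_apps_head: "beta h h' \<Longrightarrow> beta (apps h vs) (apps h' vs)"
  by (induction vs arbitrary: h h') (auto intro: beta.appL)

lemma apps_spine: "\<exists>h vs. s = apps h vs \<and> (\<forall>a b. h \<noteq> App a b)"
proof (induction s)
  case (App s1 s2)
  then obtain h vs where "s1 = apps h vs" "\<forall>a b. h \<noteq> App a b" by blast
  then show ?case by (intro exI[of _ h] exI[of _ "vs @ [s2]"]) (simp add: apps_snoc)
qed (metis apps.simps(1) trm.distinct)+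

definition immsub :: "trm \<Rightarrow> trm \<Rightarrow> bool" where
  "immsub a b \<longleftrightarrow> b = Lam a \<or> (\<exists>c. b = App a c) \<or> (\<exists>c. b = App c a)"

lemma immsub_size: "immsub\<^sup>+\<^sup>+ a b \<Longrightarrow> size a < size b"
  by (induction rule: tranclp_induct) (auto simp: immsub_def)

lemma immsub_apps_arg: "v \<in> set vs \<Longrightarrow> immsub\<^sup>+\<^sup>+ v (apps h vs)"
proof (induction vs rule: rev_induct)
  case (snoc x vs)
  have "immsub (apps h vs) (apps h (vs @ [x]))" and "immsub x (apps h (vs @ [x]))"
    by (auto simp: immsub_def apps_snoc)
  with snoc show ?case by (auto intro: tranclp.trancl_into_trancl)
qed simp

lemma is_lam_immsub: "immsub\<^sup>*\<^sup>* s t \<Longrightarrow> is_lam t \<Longrightarrow> is_lam s"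
  by (induction rule: converse_rtranclp_induct) (auto simp: immsub_def)

lemma beta_immsub: "immsub\<^sup>*\<^sup>* s t \<Longrightarrow> beta s s' \<Longrightarrow> \<exists>t'. beta t t' \<and> immsub\<^sup>*\<^sup>* s' t'"
proof (induction rule: rtranclp_induct)
  case (step y z)
  then obtain y' where y': "beta y y'" "immsub\<^sup>*\<^sup>* s' y'" by blast
  from step(2) consider "z = Lam y" | c where "z = App y c" | c where "z = App c y"
    unfolding immsub_def by blast
  then show ?case
  proof cases
    case 1
    then show ?thesis using y' by (metis beta.lam immsub_def rtranclp.rtrancl_into_rtrancl)
  next
    case (2 c)
    then show ?thesis using y' by (metis beta.appL immsub_def rtranclp.rtrancl_into_rtrancl)
  next
    case (3 c)
    then show ?thesis using y' by (metis beta.appR immsub_def rtranclp.rtrancl_into_rtrancl)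
  qed
qed blast

(* A lambda-term is sn if its proper subterms and its beta-reducts are: the spine
   cases variable, abstraction and redex are handled by sn_apps_Var, sn_Lam and sn_redex. *)
lemma sn_lam_term:
  assumes lam: "is_lam s" and sub: "\<And>v. immsub\<^sup>+\<^sup>+ v s \<Longrightarrow> sn v" and red: "\<And>s'. beta s s' \<Longrightarrow> sn s'"
  shows "sn s"
proof -
  obtain h vs where s: "s = apps h vs" and h: "\<forall>a b. h \<noteq> App a b" using apps_spine by blast
  have args: "\<forall>v\<in>set vs. sn v" using sub immsub_apps_arg s by blast
  show ?thesis
  proof (cases h)
    case (Var x) then show ?thesis using s args sn_apps_Var by simp
  next
    case (Lam b)
    show ?thesis
    proof (cases vs)
      case Nil
      have "immsub\<^sup>+\<^sup>+ b s" using s Nil Lam by (simp add: immsub_def tranclp.r_into_trancl)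
      then show ?thesis using sub sn_Lam s Nil Lam by simp
    next
      case (Cons u vs0)
      have "beta s (apps (subst b 0 u) vs0)" using s Lam Cons by (simp add: beta_apps_head beta.root)
      then show ?thesis using red sn_redex args s Lam Cons by simp
    qed
  next
    case (App a c) then show ?thesis using h by blast
  next
    case (Sub a c) then show ?thesis using lam s is_lam_apps by fastforce
  qed
qed

(* All subterms of a beta-SN lambda-term are sn, by induction on beta-reduction and
   then on the size of the subterm. *)
lemma beta_SN_imp_sn:
  assumes "Wellfounded.accp (\<lambda>y x. beta x y) t" and "is_lam t" and "immsub\<^sup>*\<^sup>* s t"
  shows "sn s"
  using assms
proof (induction arbitrary: s rule: accp.induct)
  case (accI t)
  from accI.prems(2) show "sn s"
  proof (induction s rule: measure_induct_rule[of size])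
    case (less s)
    show ?case
    proof (rule sn_lam_term)
      show "is_lam s" using is_lam_immsub[OF less.prems accI.prems(1)] .
    next
      fix v assume "immsub\<^sup>+\<^sup>+ v s"
      then show "sn v"
        using less.IH less.prems immsub_size by (meson rtranclp_trans tranclp_into_rtranclp)
    next
      fix s' assume "beta s s'"
      then obtain t' where "beta t t'" "immsub\<^sup>*\<^sup>* s' t'" using beta_immsub less.prems by blast
      then show "sn s'" using accI.IH accI.prems(1) is_lam_beta by blast
    qed
  qed
qed

theorem corollary20:
  assumes "is_lam t" and "SN beta t"
  shows "SN lj t"
proof -
  have "sn t"
    using beta_SN_imp_sn[OF assms(2)[unfolded SN_iff_accp] assms(1) rtranclp.rtrancl_refl] .
  then show ?thesis by (simp add: SN_iff_accp sn_def)
qed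

end
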